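(* In the setting below (a differential calculus satisfying conditions (1)–(3), a pseudo-Riemannian bilinear metric $g$, and $\psi_{\omega,\theta}(\eta)$ defined as below), for all $\omega,\theta,\eta\in\mathcal{Z}(\mathcal{E})$ and $a'\in\mathcal{Z}(\mathcal{A})$, $$\psi_{\omega,\theta}(\eta a')=\psi_{\omega,\theta}(\eta)a'+2\,g(\omega\otimes_{\mathcal{A}}\eta)\,g(\theta\otimes_{\mathcal{A}}da').$$
   Context: $(\Omega(\mathcal{A}),d)$ is a differential calculus on a complex algebra $\mathcal{A}$ ($\Omega=\oplus_j\Omega^j$, $\Omega^0=\mathcal{A}$, bimodules $\Omega^j$, bimodule product $\wedge$ adding degrees, $d^2=0$, graded Leibniz rule, $\Omega^j$ right-spanned by $da_0\wedge\cdots\wedge da_{j-1}$), $\mathcal{E}=\Omega^1(\mathcal{A})$ a finitely generated projective right $\mathcal{A}$-module, $\wedge:\mathcal{E}\otimes_{\mathcal{A}}\mathcal{E}\to\Omega^2(\mathcal{A})$ the induced product, $\mathcal{Z}(\mathcal{M})=\{m:am=ma\ \forall a\in\mathcal{A}\}$. Conditions: (1) the multiplication map $\mathcal{Z}(\mathcal{E})\otimes_{\mathcal{Z}(\mathcal{A})}\mathcal{A}\to\mathcal{E}$ is an isomorphism; (2) $\mathcal{E}\otimes_{\mathcal{A}}\mathcal{E}=\ker(\wedge)\oplus\mathcal{F}$, $\mathcal{F}$ a right submodule with $Q=\wedge|_{\mathcal{F}}$ a right module isomorphism onto $\Omega^2(\mathcal{A})$; with $P_{\rm sym}$ the idempotent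 with image $\ker\wedge$ and kernel $\mathcal{F}$ and $\sigma=2P_{\rm sym}-1$, (3) $\sigma(\omega\otimes_{\mathcal{A}}\eta)=\eta\otimes_{\mathcal{A}}\omega$ for $\omega,\eta\in\mathcal{Z}(\mathcal{E})$. With an idempotent $p\in M_n(\mathcal{A})$, $p(\mathcal{A}^n)=\mathcal{E}$, $\Phi_j=p(e_j)$, $\nabla^{Gr}(\sum_j\Phi_ja_j)=\sum_j\Phi_j\otimes_{\mathcal{A}}da_j$ and $\nabla_0:=\nabla^{Gr}-Q^{-1}\circ(\wedge\circ\nabla^{Gr}+d)$. $g$ is an $\mathcal{A}$-bimodule map $\mathcal{E}\otimes_{\mathcal{A}}\mathcal{E}\to\mathcal{A}$ with $g\circ\sigma=g$ and $e\mapsto g(e\otimes_{\mathcal{A}}-)$ a right module isomorphism $\mathcal{E}\to\mathrm{Hom}_{\mathcal{A}}(\mathcal{E},\mathcal{A})$. For $\alpha,\beta\in\mathcal{E}$ let $G_{\alpha,\beta}(x\otimes_{\mathcal{A}}y)=g(\alpha\otimes_{\mathcal{A}}x)g(\beta\otimes_{\mathcal{A}}y)$. For $\omega,\eta,\theta\in\mathcal{Z}(\mathcal{E})$: $\psi_{\omega,\theta}(\eta)=g(\omega\otimes_{\mathcal{A}}dg(\eta\otimes_{\mathcal{A}}\theta))-g(\eta\otimes_{\mathcal{A}}dg(\theta\otimes_{\mathcal{A}}\omega))+g(\theta\otimes_{\mathcal{A}}dg(\omega\otimes_{\mathcal{A}}\eta))-G_{\eta,\theta}((1-\sigma)\nabla_0(\omega))+G_{\omega,\theta}((1-\sigma)\nabla_0(\eta))-G_{\eta,\omega}((1-\sigma)\nabla_0(\theta))$.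 *)

theory Defs
  imports Complex_Main
begin

definition zmult :: "int \<Rightarrow> 'g::ab_group_add \<Rightarrow> 'g" where
  "zmult k x = (if 0 \<le> k then sum_list (replicate (nat k) x)
                else - sum_list (replicate (nat (- k)) x))"

definition fsupp :: "('b \<Rightarrow> int) \<Rightarrow> 'b set" where
  "fsupp f = {p. f p \<noteq> 0}"

definition fsum :: "('m \<Rightarrow> 'n \<Rightarrow> 't::ab_group_add) \<Rightarrow> ('m \<times> 'n \<Rightarrow> int) \<Rightarrow> 't" where
  "fsum tens f = (\<Sum>p\<in>fsupp f. zmult (f p) (tens (fst p) (snd p)))"

definition delta :: "'b \<Rightarrow> 'b \<Rightarrow> int" where
  "delta p = (\<lambda>q. if q = p then 1 else 0)"

text \<open>The subgroup of the free abelian group on M x N generated by the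
  defining relations of the balanced tensor product over R.\<close>
inductive_set tensor_rels ::
  "'m::ab_group_add set \<Rightarrow> 'n::ab_group_add set \<Rightarrow> 'r set \<Rightarrow> ('m \<Rightarrow> 'r \<Rightarrow> 'm)
    \<Rightarrow> ('r \<Rightarrow> 'n \<Rightarrow> 'n) \<Rightarrow> ('m \<times> 'n \<Rightarrow> int) set"
  for M N R ra la where
  zero: "(\<lambda>_. 0) \<in> tensor_rels M N R ra la"
| add: "f \<in> tensor_rels M N R ra la \<Longrightarrow> h \<in> tensor_rels M N R ra la
          \<Longrightarrow> (\<lambda>p. f p + h p) \<in> tensor_rels M N R ra la"
| neg: "f \<in> tensor_rels M N R ra la \<Longrightarrow> (\<lambda>p. - f p) \<in> tensor_rels M N R ra la"
| lin1: "x \<in> M \<Longrightarrow> x' \<in> M \<Longrightarrow> y \<in> N \<Longrightarrow>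
          (\<lambda>p. delta (x + x', y) p - delta (x, y) p - delta (x', y) p) \<in> tensor_rels M N R ra la"
| lin2: "x \<in> M \<Longrightarrow> y \<in> N \<Longrightarrow> y' \<in> N \<Longrightarrow>
          (\<lambda>p. delta (x, y + y') p - delta (x, y) p - delta (x, y') p) \<in> tensor_rels M N R ra la"
| bal: "x \<in> M \<Longrightarrow> r \<in> R \<Longrightarrow> y \<in> N \<Longrightarrow>
          (\<lambda>p. delta (ra x r, y) p - delta (x, la r y) p) \<in> tensor_rels M N R ra la"

text \<open>tens exhibits T (the whole type) as the tensor product M (x)_R N:
  the canonical map from the free abelian group on M x N modulo the balanced
  relations to T is well defined, surjective and injective.\<close>
definition is_tensor_product ::
  "'m::ab_group_add set \<Rightarrow> 'n::ab_group_add set \<Rightarrow> 'r set \<Rightarrow> ('m \<Rightarrow> 'r \<Rightarrow> 'm)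
    \<Rightarrow> ('r \<Rightarrow> 'n \<Rightarrow> 'n) \<Rightarrow> ('m \<Rightarrow> 'n \<Rightarrow> 't::ab_group_add) \<Rightarrow> bool" where
  "is_tensor_product M N R ra la tens \<longleftrightarrow>
     (\<forall>x\<in>M. \<forall>x'\<in>M. \<forall>y\<in>N. tens (x + x') y = tens x y + tens x' y) \<and>
     (\<forall>x\<in>M. \<forall>y\<in>N. \<forall>y'\<in>N. tens x (y + y') = tens x y + tens x y') \<and>
     (\<forall>x\<in>M. \<forall>r\<in>R. \<forall>y\<in>N. tens (ra x r) y = tens x (la r y)) \<and>
     (\<forall>t. \<exists>f. finite (fsupp f) \<and> fsupp f \<subseteq> M \<times> N \<and> fsum tens f = t) \<and>
     (\<forall>f. finite (fsupp f) \<and> fsupp f \<subseteq> M \<times> N \<and> fsum tens f = 0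
            \<longrightarrow> f \<in> tensor_rels M N R ra la)"

definition bimod :: "('a::ring_1 \<Rightarrow> 'm::ab_group_add \<Rightarrow> 'm) \<Rightarrow> ('m \<Rightarrow> 'a \<Rightarrow> 'm) \<Rightarrow> bool" where
  "bimod l r \<longleftrightarrow>
     (\<forall>a x y. l a (x + y) = l a x + l a y) \<and> (\<forall>a b x. l (a + b) x = l a x + l b x) \<and>
     (\<forall>a b x. l (a * b) x = l a (l b x)) \<and> (\<forall>x. l 1 x = x) \<and>
     (\<forall>a x y. r (x + y) a = r x a + r y a) \<and> (\<forall>a b x. r x (a + b) = r x a + r x b) \<and>
     (\<forall>a b x. r x (a * b) = r (r x a) b) \<and> (\<forall>x. r x 1 = x) \<and>
     (\<forall>a b x. l a (r x b) = r (l a x) b)"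

definition complex_alg :: "(complex \<Rightarrow> 'a::ring_1) \<Rightarrow> bool" where
  "complex_alg ofC \<longleftrightarrow> ofC 1 = 1 \<and> (\<forall>c d. ofC (c + d) = ofC c + ofC d) \<and>
     (\<forall>c d. ofC (c * d) = ofC c * ofC d) \<and> (\<forall>c a. ofC c * a = a * ofC c)"

definition centA :: "'a::ring_1 set" where
  "centA = {a. \<forall>b. a * b = b * a}"

definition centM :: "('a::ring_1 \<Rightarrow> 'm \<Rightarrow> 'm) \<Rightarrow> ('m \<Rightarrow> 'a \<Rightarrow> 'm) \<Rightarrow> 'm set" where
  "centM l r = {m. \<forall>a. l a m = r m a}"

text \<open>Omega^0 = A ('a), Omega^1 = E ('e), Omega^2 ('w); dA : A -> E, dE : E -> Omega^2,
  wed : E x E -> Omega^2 the bimodule product.\<close>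
definition diff_calc ::
  "(complex \<Rightarrow> 'a::ring_1) \<Rightarrow> ('a \<Rightarrow> 'e::ab_group_add \<Rightarrow> 'e) \<Rightarrow> ('e \<Rightarrow> 'a \<Rightarrow> 'e)
   \<Rightarrow> ('a \<Rightarrow> 'w::ab_group_add \<Rightarrow> 'w) \<Rightarrow> ('w \<Rightarrow> 'a \<Rightarrow> 'w)
   \<Rightarrow> ('a \<Rightarrow> 'e) \<Rightarrow> ('e \<Rightarrow> 'w) \<Rightarrow> ('e \<Rightarrow> 'e \<Rightarrow> 'w) \<Rightarrow> bool" where
  "diff_calc ofC lE rE lW rW dA dE wed \<longleftrightarrow>
     complex_alg ofC \<and> bimod lE rE \<and> bimod lW rW \<and>
     (\<forall>a b. dA (a + b) = dA a + dA b) \<and>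
     (\<forall>c a. dA (ofC c * a) = lE (ofC c) (dA a)) \<and>
     (\<forall>a b. dA (a * b) = rE (dA a) b + lE a (dA b)) \<and>
     (\<forall>x y. dE (x + y) = dE x + dE y) \<and>
     (\<forall>c x. dE (lE (ofC c) x) = lW (ofC c) (dE x)) \<and>
     (\<forall>a x. dE (lE a x) = wed (dA a) x + lW a (dE x)) \<and>
     (\<forall>a x. dE (rE x a) = rW (dE x) a - wed x (dA a)) \<and>
     (\<forall>a. dE (dA a) = 0) \<and>
     (\<forall>x x' y. wed (x + x') y = wed x y + wed x' y) \<and>
     (\<forall>x y y'. wed x (y + y') = wed x y + wed x y') \<and>
     (\<forall>a x y. lW a (wed x y) = wed (lE a x) y) \<and>
     (\<forall>a x y. wed (rE x a) y = wed x (lE a y)) \<and>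
     (\<forall>a x y. rW (wed x y) a = wed x (rE y a)) \<and>
     (\<forall>x. \<exists>xs::('a \<times> 'a) list. x = sum_list (map (\<lambda>(a, b). rE (dA a) b) xs)) \<and>
     (\<forall>w. \<exists>xs::('a \<times> 'a \<times> 'a) list.
            w = sum_list (map (\<lambda>(a0, a1, b). rW (wed (dA a0) (dA a1)) b) xs))"

text \<open>T ('t) with tens is E (x)_A E as an A-bimodule; wedT is the induced wedge map.\<close>
definition tensor_EE ::
  "('a::ring_1 \<Rightarrow> 'e::ab_group_add \<Rightarrow> 'e) \<Rightarrow> ('e \<Rightarrow> 'a \<Rightarrow> 'e)
   \<Rightarrow> ('a \<Rightarrow> 't::ab_group_add \<Rightarrow> 't) \<Rightarrow> ('t \<Rightarrow> 'a \<Rightarrow> 't) \<Rightarrow> ('e \<Rightarrow> 'e \<Rightarrow> 't) \<Rightarrow> bool" where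
  "tensor_EE lE rE lT rT tens \<longleftrightarrow>
     is_tensor_product UNIV UNIV UNIV rE lE tens \<and> bimod lT rT \<and>
     (\<forall>a x y. lT a (tens x y) = tens (lE a x) y) \<and>
     (\<forall>a x y. rT (tens x y) a = tens x (rE y a))"

definition induced_wedge ::
  "('e \<Rightarrow> 'e \<Rightarrow> 't::ab_group_add) \<Rightarrow> ('e \<Rightarrow> 'e \<Rightarrow> 'w::ab_group_add) \<Rightarrow> ('t \<Rightarrow> 'w) \<Rightarrow> bool" where
  "induced_wedge tens wed wedT \<longleftrightarrow>
     (\<forall>s u. wedT (s + u) = wedT s + wedT u) \<and> (\<forall>x y. wedT (tens x y) = wed x y)"

text \<open>Condition (1): tz is Z(E) (x)_{Z(A)} A, and mu (the multiplication map) is bijective.\<close>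
definition cond1 ::
  "('a::ring_1 \<Rightarrow> 'e::ab_group_add \<Rightarrow> 'e) \<Rightarrow> ('e \<Rightarrow> 'a \<Rightarrow> 'e)
   \<Rightarrow> ('e \<Rightarrow> 'a \<Rightarrow> 'z::ab_group_add) \<Rightarrow> ('z \<Rightarrow> 'e) \<Rightarrow> bool" where
  "cond1 lE rE tz mu \<longleftrightarrow>
     is_tensor_product (centM lE rE) UNIV centA rE (\<lambda>r y. r * y) tz \<and>
     (\<forall>s u. mu (s + u) = mu s + mu u) \<and>
     (\<forall>w\<in>centM lE rE. \<forall>a. mu (tz w a) = rE w a) \<and> bij mu"

definition cond2 :: "('t::ab_group_add \<Rightarrow> 'a::ring_1 \<Rightarrow> 't) \<Rightarrow> ('t \<Rightarrow> 'w::ab_group_add) \<Rightarrow> 't set \<Rightarrow> bool" where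
  "cond2 rT wedT F \<longleftrightarrow>
     0 \<in> F \<and> (\<forall>f\<in>F. \<forall>f'\<in>F. f + f' \<in> F) \<and> (\<forall>f\<in>F. \<forall>a. rT f a \<in> F) \<and>
     {t. wedT t = 0} \<inter> F = {0} \<and>
     (\<forall>t. \<exists>k f. wedT k = 0 \<and> f \<in> F \<and> t = k + f) \<and>
     bij_betw wedT F UNIV"

definition Psym :: "('t::ab_group_add \<Rightarrow> 'w::zero) \<Rightarrow> 't set \<Rightarrow> 't \<Rightarrow> 't" where
  "Psym wedT F t = (THE k. wedT k = 0 \<and> t - k \<in> F)"

definition sigma :: "('t::ab_group_add \<Rightarrow> 'w::zero) \<Rightarrow> 't set \<Rightarrow> 't \<Rightarrow> 't" where
  "sigma wedT F t = Psym wedT F t + Psym wedT F t - t"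

definition Qinv :: "('t \<Rightarrow> 'w) \<Rightarrow> 't set \<Rightarrow> 'w \<Rightarrow> 't" where
  "Qinv wedT F w = (THE f. f \<in> F \<and> wedT f = w)"

definition cond3 ::
  "('a::ring_1 \<Rightarrow> 'e::ab_group_add \<Rightarrow> 'e) \<Rightarrow> ('e \<Rightarrow> 'a \<Rightarrow> 'e) \<Rightarrow> ('e \<Rightarrow> 'e \<Rightarrow> 't::ab_group_add)
   \<Rightarrow> ('t \<Rightarrow> 'w::zero) \<Rightarrow> 't set \<Rightarrow> bool" where
  "cond3 lE rE tens wedT F \<longleftrightarrow>
     (\<forall>w\<in>centM lE rE. \<forall>e\<in>centM lE rE. sigma wedT F (tens w e) = tens e w)"

definition pA :: "nat \<Rightarrow> (nat \<Rightarrow> nat \<Rightarrow> 'a::ring_1) \<Rightarrow> (nat \<Rightarrow> 'a) set" where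
  "pA n p = {xi. (\<forall>j\<ge>n. xi j = 0) \<and> (\<forall>i<n. (\<Sum>j<n. p i j * xi j) = xi i)}"

text \<open>p is an idempotent in M_n(A), Phi j = p(e_j), and xi |-> sum Phi_j xi_j is the
  identification p(A^n) = E.\<close>
definition proj_data ::
  "('e::ab_group_add \<Rightarrow> 'a::ring_1 \<Rightarrow> 'e) \<Rightarrow> nat \<Rightarrow> (nat \<Rightarrow> nat \<Rightarrow> 'a) \<Rightarrow> (nat \<Rightarrow> 'e) \<Rightarrow> bool" where
  "proj_data rE n p Phi \<longleftrightarrow>
     (\<forall>i<n. \<forall>j<n. (\<Sum>k<n. p i k * p k j) = p i j) \<and>
     (\<forall>j<n. Phi j = (\<Sum>k<n. rE (Phi k) (p k j))) \<and>
     bij_betw (\<lambda>xi. \<Sum>j<n. rE (Phi j) (xi j)) (pA n p) UNIV"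

definition coord ::
  "('e::ab_group_add \<Rightarrow> 'a::ring_1 \<Rightarrow> 'e) \<Rightarrow> nat \<Rightarrow> (nat \<Rightarrow> nat \<Rightarrow> 'a) \<Rightarrow> (nat \<Rightarrow> 'e) \<Rightarrow> 'e \<Rightarrow> nat \<Rightarrow> 'a" where
  "coord rE n p Phi e = (THE xi. xi \<in> pA n p \<and> (\<Sum>j<n. rE (Phi j) (xi j)) = e)"

definition nablaGr ::
  "('e::ab_group_add \<Rightarrow> 'a::ring_1 \<Rightarrow> 'e) \<Rightarrow> nat \<Rightarrow> (nat \<Rightarrow> nat \<Rightarrow> 'a) \<Rightarrow> (nat \<Rightarrow> 'e)
   \<Rightarrow> ('e \<Rightarrow> 'e \<Rightarrow> 't::ab_group_add) \<Rightarrow> ('a \<Rightarrow> 'e) \<Rightarrow> 'e \<Rightarrow> 't" where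
  "nablaGr rE n p Phi tens dA e = (\<Sum>j<n. tens (Phi j) (dA (coord rE n p Phi e j)))"

definition nabla0 ::
  "('e::ab_group_add \<Rightarrow> 'a::ring_1 \<Rightarrow> 'e) \<Rightarrow> nat \<Rightarrow> (nat \<Rightarrow> nat \<Rightarrow> 'a) \<Rightarrow> (nat \<Rightarrow> 'e)
   \<Rightarrow> ('e \<Rightarrow> 'e \<Rightarrow> 't::ab_group_add) \<Rightarrow> ('a \<Rightarrow> 'e) \<Rightarrow> ('e \<Rightarrow> 'w::ab_group_add)
   \<Rightarrow> ('t \<Rightarrow> 'w) \<Rightarrow> 't set \<Rightarrow> 'e \<Rightarrow> 't" where
  "nabla0 rE n p Phi tens dA dE wedT F e =
     nablaGr rE n p Phi tens dA e
     - Qinv wedT F (wedT (nablaGr rE n p Phi tens dA e) + dE e)"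

text \<open>g : E (x)_A E -> A is a bimodule map, g o sigma = g, and e |-> g(e (x) -) is a
  bijection from E onto Hom_A(E, A) (right A-linear maps).\<close>
definition metric ::
  "('a::ring_1 \<Rightarrow> 'e::ab_group_add \<Rightarrow> 'e) \<Rightarrow> ('e \<Rightarrow> 'a \<Rightarrow> 'e)
   \<Rightarrow> ('a \<Rightarrow> 't::ab_group_add \<Rightarrow> 't) \<Rightarrow> ('t \<Rightarrow> 'a \<Rightarrow> 't) \<Rightarrow> ('e \<Rightarrow> 'e \<Rightarrow> 't)
   \<Rightarrow> ('t \<Rightarrow> 'w::zero) \<Rightarrow> 't set \<Rightarrow> ('t \<Rightarrow> 'a) \<Rightarrow> bool" where
  "metric lE rE lT rT tens wedT F g \<longleftrightarrow>
     (\<forall>s u. g (s + u) = g s + g u) \<and>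
     (\<forall>a t. g (lT a t) = a * g t) \<and> (\<forall>a t. g (rT t a) = g t * a) \<and>
     (\<forall>t. g (sigma wedT F t) = g t) \<and>
     (\<forall>phi :: 'e \<Rightarrow> 'a. ((\<forall>x y. phi (x + y) = phi x + phi y) \<and> (\<forall>x a. phi (rE x a) = phi x * a))
         \<longrightarrow> (\<exists>!e. \<forall>x. g (tens e x) = phi x))"

text \<open>G_{alpha,beta}: the additive map on E (x)_A E with x (x) y |-> g(alpha (x) x) g(beta (x) y).\<close>
definition Gmap :: "('t::ab_group_add \<Rightarrow> 'a::ring_1) \<Rightarrow> ('e \<Rightarrow> 'e \<Rightarrow> 't) \<Rightarrow> 'e \<Rightarrow> 'e \<Rightarrow> 't \<Rightarrow> 'a" where
  "Gmap g tens al be =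
     (THE h. (\<forall>s u. h (s + u) = h s + h u) \<and>
             (\<forall>x y. h (tens x y) = g (tens al x) * g (tens be y)))"

definition psi ::
  "('e::ab_group_add \<Rightarrow> 'a::ring_1 \<Rightarrow> 'e) \<Rightarrow> nat \<Rightarrow> (nat \<Rightarrow> nat \<Rightarrow> 'a) \<Rightarrow> (nat \<Rightarrow> 'e)
   \<Rightarrow> ('e \<Rightarrow> 'e \<Rightarrow> 't::ab_group_add) \<Rightarrow> ('a \<Rightarrow> 'e) \<Rightarrow> ('e \<Rightarrow> 'w::ab_group_add)
   \<Rightarrow> ('t \<Rightarrow> 'w) \<Rightarrow> 't set \<Rightarrow> ('t \<Rightarrow> 'a) \<Rightarrow> 'e \<Rightarrow> 'e \<Rightarrow> 'e \<Rightarrow> 'a" where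
  "psi rE n p Phi tens dA dE wedT F g w th e =
     (let N0 = nabla0 rE n p Phi tens dA dE wedT F;
          om = (\<lambda>t. t - sigma wedT F t)
      in g (tens w (dA (g (tens e th)))) - g (tens e (dA (g (tens th w))))
         + g (tens th (dA (g (tens w e))))
         - Gmap g tens e th (om (N0 w)) + Gmap g tens w th (om (N0 e))
         - Gmap g tens e w (om (N0 th)))"

end

theory Submission
  imports Defs
begin

(* Every term of \<psi>\<^sub>\<omega>\<^sub>,\<^sub>\<theta>(\<eta>) is right linear in a central \<eta> over Z(A), except where d
   falls on a'. By the Leibniz rules, d g(\<eta>a' \<otimes> \<theta>) and d g(\<omega> \<otimes> \<eta>a') contribute
   g(\<eta> \<otimes> \<theta>) g(\<omega> \<otimes> da') and g(\<omega> \<otimes> \<eta>) g(\<theta> \<otimes> da'), and \<nabla>\<^sub>0(\<eta>a') = \<nabla>\<^sub>0(\<eta>)a' + \<eta> \<otimes> da'.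
   Condition (1) extends condition (3) to \<sigma>(\<eta> \<otimes> y) = y \<otimes> \<eta> for all y, so (1 - \<sigma>) of the extra
   term is \<eta> \<otimes> da' - da' \<otimes> \<eta>, on which G\<^sub>\<omega>\<^sub>,\<^sub>\<theta> gives
   g(\<omega> \<otimes> \<eta>) g(\<theta> \<otimes> da') - g(\<omega> \<otimes> da') g(\<theta> \<otimes> \<eta>). Since g(\<eta> \<otimes> \<theta>) = g(\<theta> \<otimes> \<eta>) is central, the
   two g(\<omega> \<otimes> da') terms cancel, leaving 2 g(\<omega> \<otimes> \<eta>) g(\<theta> \<otimes> da'). *)

lemma zmult_plus_one: "zmult (k + 1) x = zmult k x + (x::'g::ab_group_add)"
proof (cases "0 \<le> k")
  case True
  then have "nat (k + 1) = Suc (nat k)" by simp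
  with True show ?thesis by (simp add: zmult_def add.commute)
next
  case False
  show ?thesis
  proof (cases "k = -1")
    case True
    then show ?thesis by (simp add: zmult_def)
  next
    case False
    with \<open>\<not> 0 \<le> k\<close> have "\<not> 0 \<le> k + 1" "nat (- k) = Suc (nat (- (k + 1)))" by simp_all
    with \<open>\<not> 0 \<le> k\<close> show ?thesis by (simp add: zmult_def)
  qed
qed

lemma zmult_minus_one: "zmult (k - 1) x = zmult k x - (x::'g::ab_group_add)"
  using zmult_plus_one[of "k - 1" x] by simp

lemma zmult_add_left: "zmult (k + l) x = zmult k x + zmult l (x::'g::ab_group_add)"
proof (induct l rule: int_induct[where k = 0])
  case base
  then show ?case by (simp add: zmult_def)
next
  case (step1 i)
  then show ?case using zmult_plus_one[of "k + i" x] zmult_plus_one[of i x] by (simp add: add.assoc)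
next
  case (step2 i)
  have "zmult (k + (i - 1)) x = zmult (k + i) x - x"
    using zmult_minus_one[of "k + i" x] by (simp add: algebra_simps)
  with step2 show ?case using zmult_minus_one[of i x] by simp
qed

lemma zmult_uminus_left: "zmult (- k) x = - zmult k (x::'g::ab_group_add)"
  using zmult_add_left[of k "- k" x] by (simp add: zmult_def eq_neg_iff_add_eq_0 add.commute)

lemma (in additive) zmult: "f (zmult k x) = zmult k (f x)"
proof (induct k rule: int_induct[where k = 0])
  case base
  then show ?case by (simp add: zmult_def zero)
next
  case (step1 i)
  then show ?case by (simp add: zmult_plus_one add)
next
  case (step2 i)
  then show ?case by (simp add: zmult_minus_one diff)
qed

lemma fsum_superset:
  assumes "finite S" "fsupp f \<subseteq> S"
  shows "fsum H f = (\<Sum>p\<in>S. zmult (f p) (H (fst p) (snd p)))"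
  unfolding fsum_def
  by (rule sum.mono_neutral_left) (use assms in \<open>auto simp: fsupp_def zmult_def\<close>)

lemma
  assumes "finite (fsupp f)" "finite (fsupp h)"
  shows finite_fsupp_add: "finite (fsupp (\<lambda>p. f p + h p))"
    and fsum_add: "fsum H (\<lambda>p. f p + h p) = fsum H f + fsum H h"
proof -
  let ?S = "fsupp f \<union> fsupp h"
  have fin: "finite ?S" using assms by simp
  have sub: "fsupp (\<lambda>p. f p + h p) \<subseteq> ?S" by (auto simp: fsupp_def)
  with fin show "finite (fsupp (\<lambda>p. f p + h p))" by (rule finite_subset[rotated])
  have "fsum H (\<lambda>p. f p + h p) = (\<Sum>p\<in>?S. zmult (f p + h p) (H (fst p) (snd p)))"
    using fin sub by (rule fsum_superset)
  also have "\<dots> = fsum H f + fsum H h"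
    using fsum_superset[OF fin, of f H] fsum_superset[OF fin, of h H]
    by (simp add: zmult_add_left sum.distrib)
  finally show "fsum H (\<lambda>p. f p + h p) = fsum H f + fsum H h" .
qed

lemma fsupp_uminus [simp]: "fsupp (\<lambda>p. - f p) = fsupp f"
  by (auto simp: fsupp_def)

lemma fsum_uminus: "fsum H (\<lambda>p. - f p) = - fsum H f"
  by (simp add: fsum_def zmult_uminus_left sum_negf)

lemma
  assumes "finite (fsupp f)" "finite (fsupp h)"
  shows finite_fsupp_diff: "finite (fsupp (\<lambda>p. f p - h p))"
    and fsum_diff: "fsum H (\<lambda>p. f p - h p) = fsum H f - fsum H h"
  using finite_fsupp_add[OF assms(1), of "\<lambda>p. - h p"] fsum_add[OF assms(1), of "\<lambda>p. - h p" H]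
    fsum_uminus[of H h] assms(2)
  by simp_all

lemma fsupp_delta [simp]: "fsupp (delta q) = {q}"
  by (auto simp: fsupp_def delta_def)

lemma fsum_delta [simp]: "fsum H (delta q) = H (fst q) (snd q)"
  unfolding fsum_def fsupp_delta by (simp add: delta_def zmult_def)

lemma (in additive) fsum: "f (fsum H c) = fsum (\<lambda>x y. f (H x y)) c"
  by (simp add: fsum_def sum zmult)

lemma fsum_cong:
  assumes "\<And>p. p \<in> fsupp f \<Longrightarrow> H (fst p) (snd p) = H' (fst p) (snd p)"
  shows "fsum H f = fsum H' f"
  unfolding fsum_def using assms by (auto intro: sum.cong)

lemma fsum_tensor_rels:
  assumes add_left: "\<And>x x' y. H (x + x') y = H x y + H x' y"
    and add_right: "\<And>x y y'. H x (y + y') = H x y + H x y'"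
    and balanced: "\<And>x r y. H (ra x r) y = H x (la r y)"
    and "f \<in> tensor_rels M N R ra la"
  shows "finite (fsupp f) \<and> fsum H f = 0"
  using assms(4)
proof (induct rule: tensor_rels.induct)
  case zero
  then show ?case by (simp add: fsupp_def fsum_def)
next
  case (add f h)
  then show ?case by (simp add: finite_fsupp_add fsum_add)
next
  case (neg f)
  then show ?case by (simp add: fsum_uminus)
next
  case (lin1 x x' y)
  then show ?case by (simp add: finite_fsupp_diff fsum_diff add_left)
next
  case (lin2 x y y')
  then show ?case by (simp add: finite_fsupp_diff fsum_diff add_right)
next
  case (bal x r y)
  then show ?case by (simp add: finite_fsupp_diff fsum_diff balanced)
qed

lemma is_tensor_product_additive_eqI:
  assumes "is_tensor_product M N R ra la tens" "additive h1" "additive h2"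
    and "\<And>x y. x \<in> M \<Longrightarrow> y \<in> N \<Longrightarrow> h1 (tens x y) = h2 (tens x y)"
  shows "h1 t = h2 t"
proof -
  obtain f where f: "fsupp f \<subseteq> M \<times> N" "fsum tens f = t"
    using assms(1) unfolding is_tensor_product_def by blast
  have "h1 t = fsum (\<lambda>x y. h1 (tens x y)) f" using additive.fsum[OF assms(2)] f(2) by metis
  also have "\<dots> = fsum (\<lambda>x y. h2 (tens x y)) f"
    by (rule fsum_cong) (use f(1) assms(4) in \<open>auto simp: mem_Times_iff\<close>)
  also have "\<dots> = h2 t" using additive.fsum[OF assms(3)] f(2) by metis
  finally show ?thesis .
qed

lemma is_tensor_product_lift:
  assumes tp: "is_tensor_product UNIV UNIV UNIV ra la tens"
    and add_left: "\<And>x x' y. H (x + x') y = H x y + H x' y"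
    and add_right: "\<And>x y y'. H x (y + y') = H x y + H x y'"
    and balanced: "\<And>x r y. H (ra x r) y = H x (la r y)"
  shows "\<exists>h. additive h \<and> (\<forall>x y. h (tens x y) = H x y)"
proof -
  have well_defined: "fsum H f1 = fsum H f2"
    if "finite (fsupp f1)" "finite (fsupp f2)" "fsum tens f1 = fsum tens f2" for f1 f2
  proof -
    have "(\<lambda>p. f1 p - f2 p) \<in> tensor_rels UNIV UNIV UNIV ra la"
      using tp that by (simp add: is_tensor_product_def finite_fsupp_diff fsum_diff)
    then have "fsum H (\<lambda>p. f1 p - f2 p) = 0"
      using fsum_tensor_rels add_left add_right balanced by blast
    with that show ?thesis by (simp add: fsum_diff)
  qed
  define rep where "rep t = (SOME f. finite (fsupp f) \<and> fsum tens f = t)" for t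
  have rep: "finite (fsupp (rep t)) \<and> fsum tens (rep t) = t" for t
    unfolding rep_def
    by (rule someI_ex[of "\<lambda>f. finite (fsupp f) \<and> fsum tens f = t"])
      (use tp in \<open>simp add: is_tensor_product_def\<close>)
  define h where "h t = fsum H (rep t)" for t
  have "additive h"
  proof
    fix s u
    have "h (s + u) = fsum H (\<lambda>p. rep s p + rep u p)"
      unfolding h_def using rep by (intro well_defined) (simp_all add: finite_fsupp_add fsum_add)
    also have "\<dots> = h s + h u" unfolding h_def using rep by (simp add: fsum_add)
    finally show "h (s + u) = h s + h u" .
  qed
  moreover have "h (tens x y) = H x y" for x y
    using well_defined[of "rep (tens x y)" "delta (x, y)"] rep by (simp add: h_def)
  ultimately show ?thesis by blast
qed

locale tensor_square =
  fixes lE :: "'a::ring_1 \<Rightarrow> 'e::ab_group_add \<Rightarrow> 'e" and rE :: "'e \<Rightarrow> 'a \<Rightarrow> 'e"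
    and lT :: "'a \<Rightarrow> 't::ab_group_add \<Rightarrow> 't" and rT :: "'t \<Rightarrow> 'a \<Rightarrow> 't"
    and tens :: "'e \<Rightarrow> 'e \<Rightarrow> 't"
  assumes tensor_EE: "tensor_EE lE rE lT rT tens"
begin

lemma tensor_product: "is_tensor_product UNIV UNIV UNIV rE lE tens"
  using tensor_EE by (simp add: tensor_EE_def)

lemma tens_add_left: "tens (x + x') y = tens x y + tens x' y"
  using tensor_product by (simp add: is_tensor_product_def)

lemma tens_add_right: "tens x (y + y') = tens x y + tens x y'"
  using tensor_product by (simp add: is_tensor_product_def)

lemma tens_rE_left: "tens (rE x a) y = tens x (lE a y)"
  using tensor_product by (simp add: is_tensor_product_def)

lemma lT_tens: "lT a (tens x y) = tens (lE a x) y"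
  using tensor_EE by (simp add: tensor_EE_def)

lemma rT_tens: "rT (tens x y) a = tens x (rE y a)"
  using tensor_EE by (simp add: tensor_EE_def)

lemma rT_add: "rT (s + u) a = rT s a + rT u a"
  using tensor_EE by (simp add: tensor_EE_def bimod_def)

lemma additive_rT: "additive (\<lambda>t. rT t a)"
  by unfold_locales (rule rT_add)

lemma additive_tens_left: "additive (\<lambda>x. tens x y)"
  by unfold_locales (rule tens_add_left)

lemma rT_minus_one: "rT t (- 1) = - t"
proof -
  have "additive (rT t)" and "rT t 1 = t"
    using tensor_EE by (simp_all add: tensor_EE_def bimod_def additive_def)
  then show ?thesis using additive.minus by metis
qed

lemma tens_additive_eqI:
  "additive h1 \<Longrightarrow> additive h2 \<Longrightarrow> (\<And>x y. h1 (tens x y) = h2 (tens x y)) \<Longrightarrow> h1 t = h2 t"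
  by (rule is_tensor_product_additive_eqI[OF tensor_product]) auto

lemma tens_lift:
  assumes "\<And>x x' y. H (x + x') y = H x y + H x' y" "\<And>x y y'. H x (y + y') = H x y + H x y'"
    and "\<And>x r y. H (rE x r) y = H x (lE r y)"
  shows "\<exists>h. additive h \<and> (\<forall>x y. h (tens x y) = H x y)"
  using is_tensor_product_lift[OF tensor_product] assms by blast

end

lemma centM_D: "x \<in> centM l r \<Longrightarrow> l a x = r x a"
  by (simp add: centM_def)

lemma centA_commute: "a \<in> centA \<Longrightarrow> a * b = b * a"
  by (simp add: centA_def)

locale metric_tensor_square = tensor_square +
  fixes wedT :: "'t::ab_group_add \<Rightarrow> 'w::zero" and F :: "'t set" and g :: "'t \<Rightarrow> 'a::ring_1"
  assumes metric: "metric lE rE lT rT tens wedT F g"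
begin

lemma g_add: "g (s + u) = g s + g u"
  using metric by (simp add: metric_def)

lemma g_sigma: "g (sigma wedT F t) = g t"
  using metric by (simp add: metric_def)

lemma g_lT: "g (lT a t) = a * g t"
  using metric by (simp add: metric_def)

lemma g_rT: "g (rT t a) = g t * a"
  using metric by (simp add: metric_def)

lemma g_tens_rE_right: "g (tens x (rE y a)) = g (tens x y) * a"
  using g_rT[of "tens x y" a] by (simp add: rT_tens)

lemma g_tens_rE_left:
  "x \<in> centM lE rE \<Longrightarrow> g (tens (rE x a) y) = a * g (tens x y)"
  using g_lT[of a "tens x y"] by (simp add: lT_tens centM_D)

lemma g_tens_lE_right:
  "x \<in> centM lE rE \<Longrightarrow> g (tens x (lE a y)) = a * g (tens x y)"
  by (simp add: g_tens_rE_left flip: tens_rE_left)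

lemma g_tens_centA:
  assumes "x \<in> centM lE rE" "y \<in> centM lE rE"
  shows "g (tens x y) \<in> centA"
  unfolding centA_def
proof (intro CollectI allI)
  fix b
  have "b * g (tens x y) = g (tens x (lE b y))" using g_tens_lE_right[OF assms(1)] by simp
  also have "\<dots> = g (tens x y) * b" using centM_D[OF assms(2)] g_tens_rE_right by simp
  finally show "g (tens x y) * b = b * g (tens x y)" by simp
qed

lemma g_tens_commute:
  assumes "cond3 lE rE tens wedT F" "x \<in> centM lE rE" "y \<in> centM lE rE"
  shows "g (tens y x) = g (tens x y)"
  using assms g_sigma[of "tens x y"] by (simp add: cond3_def)

lemma Gmap_char:
  assumes "be \<in> centM lE rE"
  shows "additive (Gmap g tens al be) \<and>
    (\<forall>x y. Gmap g tens al be (tens x y) = g (tens al x) * g (tens be y))"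
proof -
  let ?P = "\<lambda>h. additive h \<and> (\<forall>x y. h (tens x y) = g (tens al x) * g (tens be y))"
  have "\<exists>h. ?P h"
  proof (rule tens_lift)
    show "g (tens al (x + x')) * g (tens be y) =
      g (tens al x) * g (tens be y) + g (tens al x') * g (tens be y)" for x x' y
      by (simp add: tens_add_right g_add distrib_right)
    show "g (tens al x) * g (tens be (y + y')) =
      g (tens al x) * g (tens be y) + g (tens al x) * g (tens be y')" for x y y'
      by (simp add: tens_add_right g_add distrib_left)
    show "g (tens al (rE x r)) * g (tens be y) = g (tens al x) * g (tens be (lE r y))" for x r y
      by (simp add: g_tens_rE_right g_tens_lE_right[OF assms] mult.assoc)
  qed
  then obtain h where h: "?P h" ..
  have unique: "h' = h" if "?P h'" for h'
  proof
    fix t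
    show "h' t = h t" by (rule tens_additive_eqI) (use that h in auto)
  qed
  have "Gmap g tens al be = h"
    unfolding Gmap_def
  proof (rule the_equality)
    show "(\<forall>s u. h (s + u) = h s + h u) \<and> (\<forall>x y. h (tens x y) = g (tens al x) * g (tens be y))"
      using h by (simp add: additive_def)
  qed (use unique in \<open>simp add: additive_def\<close>)
  with h show ?thesis by simp
qed

lemma additive_Gmap: "be \<in> centM lE rE \<Longrightarrow> additive (Gmap g tens al be)"
  using Gmap_char by blast

lemma Gmap_tens:
  "be \<in> centM lE rE \<Longrightarrow> Gmap g tens al be (tens x y) = g (tens al x) * g (tens be y)"
  using Gmap_char by blast

lemma Gmap_rT:
  assumes "be \<in> centM lE rE"
  shows "Gmap g tens al be (rT t a) = Gmap g tens al be t * a"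
proof (rule tens_additive_eqI)
  show "additive (\<lambda>t. Gmap g tens al be (rT t a))"
    using additive_Gmap[OF assms] by (simp add: additive_def rT_add)
  show "additive (\<lambda>t. Gmap g tens al be t * a)"
    using additive_Gmap[OF assms] by (simp add: additive_def algebra_simps)
  show "Gmap g tens al be (rT (tens x y) a) = Gmap g tens al be (tens x y) * a" for x y
    by (simp add: rT_tens Gmap_tens[OF assms] g_tens_rE_right mult.assoc)
qed

lemma Gmap_rE_left:
  assumes "be \<in> centM lE rE" "al \<in> centM lE rE"
  shows "Gmap g tens (rE al a) be t = a * Gmap g tens al be t"
proof (rule tens_additive_eqI)
  show "additive (Gmap g tens (rE al a) be)" using additive_Gmap[OF assms(1)] .
  show "additive (\<lambda>t. a * Gmap g tens al be t)"
    using additive_Gmap[OF assms(1)] by (simp add: additive_def algebra_simps)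
  show "Gmap g tens (rE al a) be (tens x y) = a * Gmap g tens al be (tens x y)" for x y
    by (simp add: Gmap_tens[OF assms(1)] g_tens_rE_left[OF assms(2)] mult.assoc)
qed

end

lemma coord_eqI:
  assumes "proj_data rE n p Phi" "xi \<in> pA n p" "(\<Sum>j<n. rE (Phi j) (xi j)) = e"
  shows "coord rE n p Phi e = xi"
  unfolding coord_def
proof (rule the_equality)
  fix xi' assume "xi' \<in> pA n p \<and> (\<Sum>j<n. rE (Phi j) (xi' j)) = e"
  with assms show "xi' = xi" unfolding proj_data_def bij_betw_def inj_on_def by auto
qed (use assms in simp)

lemma coord:
  assumes "proj_data rE n p Phi"
  shows "coord rE n p Phi e \<in> pA n p" "(\<Sum>j<n. rE (Phi j) (coord rE n p Phi e j)) = e"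
proof -
  have "e \<in> (\<lambda>xi. \<Sum>j<n. rE (Phi j) (xi j)) ` pA n p"
    using assms unfolding proj_data_def bij_betw_def by blast
  then obtain xi where "xi \<in> pA n p" "(\<Sum>j<n. rE (Phi j) (xi j)) = e" by blast
  with coord_eqI[OF assms] show "coord rE n p Phi e \<in> pA n p"
    "(\<Sum>j<n. rE (Phi j) (coord rE n p Phi e j)) = e" by simp_all
qed

lemma coord_rE:
  assumes "bimod lE rE" "proj_data rE n p Phi"
  shows "coord rE n p Phi (rE e a) = (\<lambda>j. coord rE n p Phi e j * a)"
proof (rule coord_eqI[OF assms(2)])
  let ?c = "coord rE n p Phi e"
  have rE_add: "additive (\<lambda>x. rE x a)" and rE_mult: "\<And>x b. rE x (b * a) = rE (rE x b) a"
    using assms(1) by (simp_all add: bimod_def additive_def)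
  show "(\<lambda>j. ?c j * a) \<in> pA n p"
    using coord(1)[OF assms(2)] unfolding pA_def
    by (auto simp: mult.assoc[symmetric] simp flip: sum_distrib_right)
  have "(\<Sum>j<n. rE (Phi j) (?c j * a)) = rE (\<Sum>j<n. rE (Phi j) (?c j)) a"
    by (simp add: rE_mult additive.sum[OF rE_add])
  also have "\<dots> = rE e a" by (simp add: coord(2)[OF assms(2)])
  finally show "(\<Sum>j<n. rE (Phi j) (?c j * a)) = rE e a" .
qed

locale calculus_splitting = tensor_square +
  fixes ofC :: "complex \<Rightarrow> 'a::ring_1"
    and lW :: "'a \<Rightarrow> 'w::ab_group_add \<Rightarrow> 'w" and rW :: "'w \<Rightarrow> 'a \<Rightarrow> 'w"
    and dA :: "'a \<Rightarrow> 'e::ab_group_add" and dE :: "'e \<Rightarrow> 'w" and wed :: "'e \<Rightarrow> 'e \<Rightarrow> 'w"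
    and wedT :: "'t::ab_group_add \<Rightarrow> 'w" and F :: "'t set"
  assumes diff_calc: "diff_calc ofC lE rE lW rW dA dE wed"
    and induced_wedge: "induced_wedge tens wed wedT"
    and cond2: "cond2 rT wedT F"
begin

lemma bimod_E: "bimod lE rE"
  using diff_calc by (simp add: diff_calc_def)

lemma dA_mult: "dA (a * b) = rE (dA a) b + lE a (dA b)"
  using diff_calc by (simp add: diff_calc_def)

lemma dE_rE: "dE (rE x a) = rW (dE x) a - wed x (dA a)"
  using diff_calc by (simp add: diff_calc_def)

lemma rW_add: "rW (x + y) a = rW x a + rW y a"
  using diff_calc by (simp add: diff_calc_def bimod_def)

lemma additive_rW: "additive (\<lambda>x. rW x a)"
  by unfold_locales (rule rW_add)

lemma wedT_add: "wedT (s + u) = wedT s + wedT u"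
  using induced_wedge by (simp add: induced_wedge_def)

lemma additive_wedT: "additive wedT"
  by unfold_locales (rule wedT_add)

lemma wedT_tens: "wedT (tens x y) = wed x y"
  using induced_wedge by (simp add: induced_wedge_def)

lemma wedT_rT: "wedT (rT t a) = rW (wedT t) a"
proof (rule tens_additive_eqI[of "\<lambda>t. wedT (rT t a)" "\<lambda>t. rW (wedT t) a"])
  show "additive (\<lambda>t. wedT (rT t a))" by unfold_locales (simp add: rT_add wedT_add)
  show "additive (\<lambda>t. rW (wedT t) a)" by unfold_locales (simp add: rW_add wedT_add)
  show "wedT (rT (tens x y) a) = rW (wedT (tens x y)) a" for x y
    using diff_calc by (simp add: rT_tens wedT_tens diff_calc_def)
qed

lemma F_add: "f \<in> F \<Longrightarrow> f' \<in> F \<Longrightarrow> f + f' \<in> F"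
  using cond2 by (simp add: cond2_def)

lemma F_rT: "f \<in> F \<Longrightarrow> rT f a \<in> F"
  using cond2 by (simp add: cond2_def)

lemma F_diff: "f \<in> F \<Longrightarrow> f' \<in> F \<Longrightarrow> f - f' \<in> F"
  using F_add[of f "rT f' (- 1)"] F_rT[of f' "- 1"] by (simp add: rT_minus_one)

lemma F_ker_wedT: "wedT t = 0 \<Longrightarrow> t \<in> F \<Longrightarrow> t = 0"
  using cond2 by (auto simp: cond2_def)

lemma ker_wedT_plus_F: "\<exists>k f. wedT k = 0 \<and> f \<in> F \<and> t = k + f"
  using cond2 by (simp add: cond2_def)

lemma bij_betw_wedT: "bij_betw wedT F UNIV"
  using cond2 by (simp add: cond2_def)

lemma Psym_eqI: "wedT k = 0 \<Longrightarrow> t - k \<in> F \<Longrightarrow> Psym wedT F t = k"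
  unfolding Psym_def
proof (rule the_equality)
  fix k' assume k: "wedT k = 0" "t - k \<in> F" and k': "wedT k' = 0 \<and> t - k' \<in> F"
  have "(t - k) - (t - k') \<in> F" using F_diff k k' by blast
  moreover have "wedT ((t - k) - (t - k')) = 0"
    using additive.diff[OF additive_wedT] k k' by simp
  ultimately show "k' = k" using F_ker_wedT by force
qed auto

lemma Psym: "wedT (Psym wedT F t) = 0" "t - Psym wedT F t \<in> F"
proof -
  obtain k f where "wedT k = 0" "f \<in> F" "t = k + f" using ker_wedT_plus_F by blast
  then have "Psym wedT F t = k" by (intro Psym_eqI) simp_all
  with \<open>wedT k = 0\<close> \<open>f \<in> F\<close> \<open>t = k + f\<close>
  show "wedT (Psym wedT F t) = 0" "t - Psym wedT F t \<in> F" by simp_all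
qed

lemma Psym_add: "Psym wedT F (s + u) = Psym wedT F s + Psym wedT F u"
proof (rule Psym_eqI)
  show "wedT (Psym wedT F s + Psym wedT F u) = 0" using Psym by (simp add: wedT_add)
  have "s + u - (Psym wedT F s + Psym wedT F u) = (s - Psym wedT F s) + (u - Psym wedT F u)"
    by simp
  then show "s + u - (Psym wedT F s + Psym wedT F u) \<in> F" using Psym F_add by metis
qed

lemma Psym_rT: "Psym wedT F (rT t a) = rT (Psym wedT F t) a"
proof (rule Psym_eqI)
  show "wedT (rT (Psym wedT F t) a) = 0"
    using Psym additive.zero[OF additive_rW] by (simp add: wedT_rT)
  have "rT t a - rT (Psym wedT F t) a = rT (t - Psym wedT F t) a"
    using additive.diff[OF additive_rT] by metis
  then show "rT t a - rT (Psym wedT F t) a \<in> F" using Psym F_rT by metis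
qed

lemma additive_sigma: "additive (sigma wedT F)"
  by unfold_locales (simp add: sigma_def Psym_add algebra_simps)

lemma sigma_rT: "sigma wedT F (rT t a) = rT (sigma wedT F t) a"
  using additive.diff[OF additive_rT] by (simp add: sigma_def Psym_rT rT_add)

lemma Qinv_eqI: "f \<in> F \<Longrightarrow> wedT f = X \<Longrightarrow> Qinv wedT F X = f"
  unfolding Qinv_def
proof (rule the_equality)
  fix f' assume "f \<in> F" "wedT f = X" "f' \<in> F \<and> wedT f' = X"
  with bij_betw_wedT show "f' = f" unfolding bij_betw_def inj_on_def by auto
qed auto

lemma Qinv: "Qinv wedT F X \<in> F" "wedT (Qinv wedT F X) = X"
proof -
  have "X \<in> wedT ` F" using bij_betw_wedT by (simp add: bij_betw_def)
  then obtain f where "f \<in> F" "wedT f = X" by blast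
  then show "Qinv wedT F X \<in> F" "wedT (Qinv wedT F X) = X" using Qinv_eqI by simp_all
qed

lemma Qinv_rW: "Qinv wedT F (rW X a) = rT (Qinv wedT F X) a"
  using Qinv F_rT by (intro Qinv_eqI) (simp_all add: wedT_rT)

lemma nablaGr_rE:
  assumes "proj_data rE n p Phi"
  shows "nablaGr rE n p Phi tens dA (rE e a) = rT (nablaGr rE n p Phi tens dA e) a + tens e (dA a)"
proof -
  let ?c = "coord rE n p Phi e"
  have "nablaGr rE n p Phi tens dA (rE e a) = (\<Sum>j<n. tens (Phi j) (dA (?c j * a)))"
    by (simp add: nablaGr_def coord_rE[OF bimod_E assms])
  also have "\<dots> = (\<Sum>j<n. rT (tens (Phi j) (dA (?c j))) a) + (\<Sum>j<n. tens (rE (Phi j) (?c j)) (dA a))"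
    by (simp add: dA_mult tens_add_right rT_tens tens_rE_left sum.distrib)
  also have "(\<Sum>j<n. rT (tens (Phi j) (dA (?c j))) a) = rT (nablaGr rE n p Phi tens dA e) a"
    by (simp add: nablaGr_def additive.sum[OF additive_rT])
  also have "(\<Sum>j<n. tens (rE (Phi j) (?c j)) (dA a)) = tens (\<Sum>j<n. rE (Phi j) (?c j)) (dA a)"
    by (simp add: additive.sum[OF additive_tens_left])
  finally show ?thesis by (simp add: coord(2)[OF assms])
qed

lemma nabla0_rE:
  assumes "proj_data rE n p Phi"
  shows "nabla0 rE n p Phi tens dA dE wedT F (rE e a)
    = rT (nabla0 rE n p Phi tens dA dE wedT F e) a + tens e (dA a)"
proof -
  let ?NG = "nablaGr rE n p Phi tens dA e"
  let ?X = "wedT ?NG + dE e"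
  \<comment> \<open>the wedge of the new term e \<otimes> da cancels the one in d(ea) = (de)a - e \<wedge> da\<close>
  have "wedT (nablaGr rE n p Phi tens dA (rE e a)) + dE (rE e a) = rW ?X a"
    by (simp add: nablaGr_rE[OF assms] wedT_add wedT_rT wedT_tens dE_rE rW_add)
  then have "nabla0 rE n p Phi tens dA dE wedT F (rE e a)
      = rT ?NG a + tens e (dA a) - rT (Qinv wedT F ?X) a"
    by (simp add: nabla0_def nablaGr_rE[OF assms] Qinv_rW)
  also have "\<dots> = rT (?NG - Qinv wedT F ?X) a + tens e (dA a)"
    using additive.diff[OF additive_rT] by simp
  finally show ?thesis unfolding nabla0_def .
qed

lemma sigma_tens_central_left:
  assumes "cond1 lE rE tz mu" "cond3 lE rE tens wedT F" and e: "e \<in> centM lE rE"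
  shows "sigma wedT F (tens e y) = tens y e"
proof -
  have tp: "is_tensor_product (centM lE rE) UNIV centA rE (\<lambda>r y. r * y) tz"
    and mu_add: "additive mu" and mu_tz: "\<And>w a. w \<in> centM lE rE \<Longrightarrow> mu (tz w a) = rE w a"
    and "surj mu"
    using assms(1) by (auto simp: cond1_def additive_def bij_is_surj)
  then obtain z where z: "y = mu z" by blast
  \<comment> \<open>by condition (1) it suffices to take y = w b with w central, where condition (3) applies\<close>
  have "sigma wedT F (tens e (mu z)) = tens (mu z) e"
  proof (rule is_tensor_product_additive_eqI[OF tp])
    show "additive (\<lambda>z. sigma wedT F (tens e (mu z)))"
      using additive.add[OF additive_sigma] additive.add[OF mu_add]
      by unfold_locales (simp add: tens_add_right)
    show "additive (\<lambda>z. tens (mu z) e)"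
      using additive.add[OF mu_add] by unfold_locales (simp add: tens_add_left)
    fix w b assume w: "w \<in> centM lE rE"
    have "sigma wedT F (tens e (rE w b)) = rT (sigma wedT F (tens e w)) b"
      by (simp flip: rT_tens sigma_rT)
    also have "\<dots> = tens (rE w b) e"
      using assms(2) e w by (simp add: cond3_def rT_tens tens_rE_left centM_D)
    finally show "sigma wedT F (tens e (mu (tz w b))) = tens (mu (tz w b)) e"
      using mu_tz[OF w] by simp
  qed
  with z show ?thesis by simp
qed

lemma antisym_nabla0_rE:
  assumes "cond1 lE rE tz mu" "cond3 lE rE tens wedT F" "proj_data rE n p Phi"
    and "e \<in> centM lE rE"
  defines "N0 \<equiv> nabla0 rE n p Phi tens dA dE wedT F"
  shows "N0 (rE e a) - sigma wedT F (N0 (rE e a))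
    = rT (N0 e - sigma wedT F (N0 e)) a + (tens e (dA a) - tens (dA a) e)"
  using additive.add[OF additive_sigma] additive.diff[OF additive_rT]
    sigma_tens_central_left[OF assms(1,2,4)]
  by (simp add: N0_def nabla0_rE[OF assms(3)] sigma_rT algebra_simps)

end

locale metric_calculus =
  metric_tensor_square lE rE lT rT tens wedT F g +
  calculus_splitting lE rE lT rT tens ofC lW rW dA dE wed wedT F
  for lE :: "'a::ring_1 \<Rightarrow> 'e::ab_group_add \<Rightarrow> 'e" and rE lT rT
    and tens :: "'e \<Rightarrow> 'e \<Rightarrow> 't::ab_group_add" and wedT :: "'t \<Rightarrow> 'w::ab_group_add"
    and F g ofC lW rW dA dE wed
begin

lemma g_tens_dA_mult:
  "x \<in> centM lE rE \<Longrightarrow> g (tens x (dA (b * a))) = g (tens x (dA b)) * a + b * g (tens x (dA a))"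
  by (simp add: dA_mult tens_add_right g_add g_tens_rE_right g_tens_lE_right)

lemma Gmap_antisym_nabla0_rE:
  assumes "cond1 lE rE tz mu" "cond3 lE rE tens wedT F" "proj_data rE n p Phi"
    and be: "be \<in> centM lE rE" and e: "e \<in> centM lE rE"
  defines "N0 \<equiv> nabla0 rE n p Phi tens dA dE wedT F"
  shows "Gmap g tens al be (N0 (rE e a) - sigma wedT F (N0 (rE e a)))
    = Gmap g tens al be (N0 e - sigma wedT F (N0 e)) * a
      + g (tens al e) * g (tens be (dA a)) - g (tens al (dA a)) * g (tens be e)"
  using additive.add[OF additive_Gmap[OF be]] additive.diff[OF additive_Gmap[OF be]]
  by (simp add: N0_def antisym_nabla0_rE[OF assms(1-3) e] Gmap_rT[OF be] Gmap_tens[OF be])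

end

theorem lemma6p11:
  fixes ofC :: "complex \<Rightarrow> 'a::ring_1"
    and lE :: "'a \<Rightarrow> 'e::ab_group_add \<Rightarrow> 'e" and rE :: "'e \<Rightarrow> 'a \<Rightarrow> 'e"
    and lW :: "'a \<Rightarrow> 'w::ab_group_add \<Rightarrow> 'w" and rW :: "'w \<Rightarrow> 'a \<Rightarrow> 'w"
    and dA :: "'a \<Rightarrow> 'e" and dE :: "'e \<Rightarrow> 'w" and wed :: "'e \<Rightarrow> 'e \<Rightarrow> 'w"
    and lT :: "'a \<Rightarrow> 't::ab_group_add \<Rightarrow> 't" and rT :: "'t \<Rightarrow> 'a \<Rightarrow> 't"
    and tens :: "'e \<Rightarrow> 'e \<Rightarrow> 't" and wedT :: "'t \<Rightarrow> 'w"
    and tz :: "'e \<Rightarrow> 'a \<Rightarrow> 'z::ab_group_add" and mu :: "'z \<Rightarrow> 'e"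
    and F :: "'t set"
    and n :: nat and p :: "nat \<Rightarrow> nat \<Rightarrow> 'a" and Phi :: "nat \<Rightarrow> 'e"
    and g :: "'t \<Rightarrow> 'a"
    and w th e :: 'e and a' :: 'a
  assumes "diff_calc ofC lE rE lW rW dA dE wed"
    and "tensor_EE lE rE lT rT tens"
    and "induced_wedge tens wed wedT"
    and "cond1 lE rE tz mu"
    and "cond2 rT wedT F"
    and "cond3 lE rE tens wedT F"
    and "proj_data rE n p Phi"
    and "metric lE rE lT rT tens wedT F g"
    and "w \<in> centM lE rE" and "th \<in> centM lE rE" and "e \<in> centM lE rE"
    and "a' \<in> centA"
  shows "psi rE n p Phi tens dA dE wedT F g w th (rE e a')
         = psi rE n p Phi tens dA dE wedT F g w th e * a'
           + 2 * g (tens w e) * g (tens th (dA a'))"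
proof -
  interpret metric_calculus lE rE lT rT tens wedT F g ofC lW rW dA dE wed
    using assms(1-3,5,8) by unfold_locales
  note central = assms(9-11) and a' = centA_commute[OF assms(12)]
  have g_e'_left: "g (tens (rE e a') y) = g (tens e y) * a'" for y
    using g_tens_rE_left[OF assms(11)] a' by simp
  have Gmap_e'_left: "Gmap g tens (rE e a') be T = Gmap g tens e be T * a'"
    if "be \<in> centM lE rE" for be T
    using Gmap_rE_left[OF that assms(11)] a' by simp
  have "g (tens th e) = g (tens e th)"
    using g_tens_commute[OF assms(6,11,10)] .
  moreover have "g (tens e th) * g (tens w (dA a')) = g (tens w (dA a')) * g (tens e th)"
    using centA_commute[OF g_tens_centA[OF assms(11,10)]] .
  ultimately show ?thesis
    unfolding psi_def Let_def
    by (simp add: g_e'_left g_tens_rE_right Gmap_e'_left central g_tens_dA_mult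
        Gmap_antisym_nabla0_rE[OF assms(4,6,7,10,11)] algebra_simps mult_2)
qed

end
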